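(* Let $\mathcal{D}=\{(\mathbf{p}_n,\mathbf{q}_n)\}_{n=1}^N$ be data with $\mathbf{p}_n\in\mathbb{R}_{++}^K$, $\mathbf{q}_n\in\mathbb{R}_+^K$, whose associated graph $G$ satisfies the Cycle Edge Weight Equality Condition (CEWEC), and let $\mathcal{D}'$ consist of $\mathcal{D}$ together with at least one additional observation $(\mathbf{p},\mathbf{q})\in\mathbb{R}_{++}^K\times\mathbb{R}_+^K$, with associated graph $G'$. If $G'$ also satisfies the CEWEC, then for every price vector $\mathbf{p}\in\mathbb{R}_{++}^K$ and every vertex $\upsilon$ of $G$, $$M^-_{G'}(\mathbf{p},\upsilon)\ge M^-_G(\mathbf{p},\upsilon)\quad\text{and}\quad M^+_{G'}(\mathbf{p},\upsilon)\le M^+_G(\mathbf{p},\upsilon).$$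
   Context: For a dataset $\{(\mathbf{p}_n,\mathbf{q}_n)\}$, its associated graph $H$ is the weighted directed graph with one vertex $\upsilon_n$ per observation, an edge from $\upsilon_m$ to $\upsilon_n$ for each $m\ne n$, with weight $w(\upsilon_m,\upsilon_n)=\frac{\mathbf{p}_m\cdot\mathbf{q}_n}{\mathbf{p}_m\cdot\mathbf{q}_m}$. $H$ satisfies the CEWEC if for every cycle in $H$ all of whose edge weights are $\le 1$, all of its edge weights equal $1$. A walk $\upsilon_{a_0},\dots,\upsilon_{a_k}$ ($k\ge0$) in $H$ is an RP-walk if every edge weight along it is $\le 1$; write $uRv$ if there is an RP-walk from $u$ to $v$ in $H$. Set $\operatorname{VRP}_H(\upsilon)=\{l:\upsilon_l R\,\upsilon\}$ and $\operatorname{VRW}_H(\upsilon)=\{l:\upsilon R\,\upsilon_l\}$, and define $M^-_H(\mathbf{p},\upsilon)=\inf_{\mathbf{q}\in\mathbb{R}_+^K}\{\mathbf{p}\cdot\mathbf{q}:\mathbf{p}_l\cdot\mathbf{q}\ge\mathbf{p}_l\cdot\mathbf{q}_l \text{ for all } l\in\operatorname{VRW}_H(\upsilon)\}$ and $M^+_H(\mathbf{p},\upsilon)=\min\{\mathbf{p}\cdot\mathbf{q}_l: l\in\operatorname{VRP}_H(\upsilon)\}$. *)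

theory Defs
  imports "HOL-Analysis.Analysis"
begin

text \<open>A dataset is given by a number of observations N and functions
  P, Q :: nat => real^'k; observation n (for n < N) is (P n, Q n).
  The vertices of the associated graph are the indices 0..<N.\<close>

definition edge_weight :: "(nat \<Rightarrow> real^'k) \<Rightarrow> (nat \<Rightarrow> real^'k) \<Rightarrow> nat \<Rightarrow> nat \<Rightarrow> real" where
  "edge_weight P Q m n = (P m \<bullet> Q n) / (P m \<bullet> Q m)"

text \<open>A (directed, simple) cycle: a list of k >= 2 distinct vertices,
  with edges xs!i -> xs!((i+1) mod k).\<close>
definition is_cycle :: "nat \<Rightarrow> nat list \<Rightarrow> bool" where
  "is_cycle N xs \<longleftrightarrow> length xs \<ge> 2 \<and> distinct xs \<and> (\<forall>x\<in>set xs. x < N)"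

definition CEWEC :: "nat \<Rightarrow> (nat \<Rightarrow> real^'k) \<Rightarrow> (nat \<Rightarrow> real^'k) \<Rightarrow> bool" where
  "CEWEC N P Q \<longleftrightarrow>
     (\<forall>xs. is_cycle N xs \<longrightarrow>
        (\<forall>i<length xs. edge_weight P Q (xs!i) (xs!((i+1) mod length xs)) \<le> 1) \<longrightarrow>
        (\<forall>i<length xs. edge_weight P Q (xs!i) (xs!((i+1) mod length xs)) = 1))"

text \<open>RP-walk: nonempty vertex list (k >= 0 edges), consecutive vertices
  distinct (edges exist only between distinct vertices), all weights <= 1.\<close>
definition RP_walk :: "nat \<Rightarrow> (nat \<Rightarrow> real^'k) \<Rightarrow> (nat \<Rightarrow> real^'k) \<Rightarrow> nat list \<Rightarrow> bool" where
  "RP_walk N P Q xs \<longleftrightarrow> xs \<noteq> [] \<and> (\<forall>x\<in>set xs. x < N) \<and>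
     (\<forall>i. i + 1 < length xs \<longrightarrow> xs!i \<noteq> xs!(i+1) \<and> edge_weight P Q (xs!i) (xs!(i+1)) \<le> 1)"

definition RP_rel :: "nat \<Rightarrow> (nat \<Rightarrow> real^'k) \<Rightarrow> (nat \<Rightarrow> real^'k) \<Rightarrow> nat \<Rightarrow> nat \<Rightarrow> bool" where
  "RP_rel N P Q u v \<longleftrightarrow> (\<exists>xs. RP_walk N P Q xs \<and> hd xs = u \<and> last xs = v)"

definition VRP :: "nat \<Rightarrow> (nat \<Rightarrow> real^'k) \<Rightarrow> (nat \<Rightarrow> real^'k) \<Rightarrow> nat \<Rightarrow> nat set" where
  "VRP N P Q v = {l. l < N \<and> RP_rel N P Q l v}"

definition VRW :: "nat \<Rightarrow> (nat \<Rightarrow> real^'k) \<Rightarrow> (nat \<Rightarrow> real^'k) \<Rightarrow> nat \<Rightarrow> nat set" where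
  "VRW N P Q v = {l. l < N \<and> RP_rel N P Q v l}"

definition M_minus :: "nat \<Rightarrow> (nat \<Rightarrow> real^'k) \<Rightarrow> (nat \<Rightarrow> real^'k) \<Rightarrow> real^'k \<Rightarrow> nat \<Rightarrow> real" where
  "M_minus N P Q p v = Inf {p \<bullet> q | q. (\<forall>i. q $ i \<ge> 0) \<and>
        (\<forall>l\<in>VRW N P Q v. P l \<bullet> q \<ge> P l \<bullet> Q l)}"

definition M_plus :: "nat \<Rightarrow> (nat \<Rightarrow> real^'k) \<Rightarrow> (nat \<Rightarrow> real^'k) \<Rightarrow> real^'k \<Rightarrow> nat \<Rightarrow> real" where
  "M_plus N P Q p v = Min ((\<lambda>l. p \<bullet> Q l) ` VRP N P Q v)"

end

theory Submission
  imports Defs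
begin

text \<open>Adding observations keeps every RP-walk of the old graph an RP-walk of the new one, since
  edge weights between old vertices are unchanged. Hence the reachability sets VRP and VRW can
  only grow: the minimum defining \<open>M\<^sup>+\<close> ranges over more vertices, and the infimum defining
  \<open>M\<^sup>-\<close> is taken under more constraints. Neither inequality needs the CEWEC.\<close>

context
  fixes N N' :: nat and P Q P' Q' :: "nat \<Rightarrow> real^'k"
  assumes le_N': "N \<le> N'"
    and extends: "\<forall>n<N. P' n = P n \<and> Q' n = Q n"
begin

lemma edge_weight_extend:
  assumes "m < N" "n < N"
  shows "edge_weight P' Q' m n = edge_weight P Q m n"
  using extends assms by (simp add: edge_weight_def)

lemma RP_walk_extend:
  assumes "RP_walk N P Q xs"
  shows "RP_walk N' P' Q' xs"
  unfolding RP_walk_def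
proof (intro conjI allI impI)
  show "xs \<noteq> []"
    using assms by (simp add: RP_walk_def)
  have old: "\<forall>x\<in>set xs. x < N"
    using assms by (simp add: RP_walk_def)
  then show "\<forall>x\<in>set xs. x < N'"
    using le_N' by auto
  fix i assume i: "i + 1 < length xs"
  then have old_edge: "xs ! i < N" "xs ! (i + 1) < N"
    using old by auto
  show "xs ! i \<noteq> xs ! (i + 1)"
    using assms i by (simp add: RP_walk_def)
  show "edge_weight P' Q' (xs ! i) (xs ! (i + 1)) \<le> 1"
    using assms i old_edge by (simp add: RP_walk_def edge_weight_extend)
qed

lemma RP_rel_extend: "RP_rel N P Q u w \<Longrightarrow> RP_rel N' P' Q' u w"
  unfolding RP_rel_def using RP_walk_extend by blast

lemma VRW_extend_subset: "VRW N P Q v \<subseteq> VRW N' P' Q' v"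
  using RP_rel_extend le_N' unfolding VRW_def by auto

lemma VRP_extend_subset: "VRP N P Q v \<subseteq> VRP N' P' Q' v"
  using RP_rel_extend le_N' unfolding VRP_def by auto

lemma M_plus_extend_le:
  assumes "v < N"
  shows "M_plus N' P' Q' p v \<le> M_plus N P Q p v"
  unfolding M_plus_def
proof (rule Min_antimono)
  have "Q' l = Q l" if "l \<in> VRP N P Q v" for l
    using that extends by (simp add: VRP_def)
  then show "(\<lambda>l. p \<bullet> Q l) ` VRP N P Q v \<subseteq> (\<lambda>l. p \<bullet> Q' l) ` VRP N' P' Q' v"
    using VRP_extend_subset by (force simp: image_iff)
  have "RP_rel N P Q v v"
    unfolding RP_rel_def RP_walk_def using assms by (intro exI[of _ "[v]"]) auto
  then show "(\<lambda>l. p \<bullet> Q l) ` VRP N P Q v \<noteq> {}"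
    using assms by (auto simp: VRP_def)
  show "finite ((\<lambda>l. p \<bullet> Q' l) ` VRP N' P' Q' v)"
    by (simp add: VRP_def)
qed

end

lemma inner_nonneg_vec:
  fixes x y :: "real^'k"
  assumes "\<forall>i. 0 \<le> x $ i" "\<forall>i. 0 \<le> y $ i"
  shows "0 \<le> x \<bullet> y"
  using assms by (simp add: inner_vec_def sum_nonneg)

text \<open>The total bundle \<open>\<Sum>Q\<close> meets every revealed-preference constraint, so the infimum
  defining \<open>M\<^sup>-\<close> is never taken over the empty set (where it would be a junk value).\<close>

lemma sum_bundles_feasible:
  fixes P Q :: "nat \<Rightarrow> real^'k"
  assumes "\<forall>n<N. \<forall>i. 0 \<le> P n $ i \<and> 0 \<le> Q n $ i" "l < N"
  shows "P l \<bullet> Q l \<le> P l \<bullet> (\<Sum>m<N. Q m)"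
proof -
  have "P l \<bullet> (\<Sum>m<N. Q m) = (\<Sum>m<N. P l \<bullet> Q m)"
    by (simp add: inner_sum_right)
  also have "\<dots> \<ge> P l \<bullet> Q l"
    using assms by (intro member_le_sum) (auto intro: inner_nonneg_vec)
  finally show ?thesis .
qed

lemma M_minus_extend_ge:
  fixes P Q P' Q' :: "nat \<Rightarrow> real^'k"
  assumes "N \<le> N'" "\<forall>n<N. P' n = P n \<and> Q' n = Q n"
    and nonneg': "\<forall>n<N'. \<forall>i. 0 \<le> P' n $ i \<and> 0 \<le> Q' n $ i"
    and p_nonneg: "\<forall>i. 0 \<le> p $ i"
  shows "M_minus N P Q p v \<le> M_minus N' P' Q' p v"
proof -
  define cost where "cost N P Q = {p \<bullet> q | q. (\<forall>i. 0 \<le> q $ i) \<and>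
      (\<forall>l\<in>VRW N P Q v. P l \<bullet> Q l \<le> P l \<bullet> q)}" for N and P Q :: "nat \<Rightarrow> real^'k"
  have "P' l = P l \<and> Q' l = Q l" if "l \<in> VRW N P Q v" for l
    using that assms(2) by (simp add: VRW_def)
  then have subset: "cost N' P' Q' \<subseteq> cost N P Q"
    unfolding cost_def using VRW_extend_subset[OF assms(1,2)] by fastforce
  have "bdd_below (cost N P Q)"
    using p_nonneg by (intro bdd_belowI[of _ 0]) (auto simp: cost_def intro: inner_nonneg_vec)
  moreover have "p \<bullet> (\<Sum>m<N'. Q' m) \<in> cost N' P' Q'"
    unfolding cost_def using nonneg' sum_bundles_feasible[OF nonneg']
    by (intro CollectI exI[of _ "\<Sum>m<N'. Q' m"]) (auto simp: VRW_def intro!: sum_nonneg)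
  ultimately have "Inf (cost N P Q) \<le> Inf (cost N' P' Q')"
    using subset by (intro cInf_superset_mono) auto
  then show ?thesis
    by (simp add: M_minus_def cost_def)
qed

theorem fact1:
  fixes P Q P' Q' :: "nat \<Rightarrow> real^'k" and N N' :: nat and p :: "real^'k" and v :: nat
  assumes "\<forall>n<N. \<forall>i. P n $ i > 0 \<and> Q n $ i \<ge> 0"
    and "N < N'"
    and "\<forall>n<N. P' n = P n \<and> Q' n = Q n"
    and "\<forall>n<N'. \<forall>i. P' n $ i > 0 \<and> Q' n $ i \<ge> 0"
    and "CEWEC N P Q"
    and "CEWEC N' P' Q'"
    and "\<forall>i. p $ i > 0"
    and "v < N"
  shows "M_minus N' P' Q' p v \<ge> M_minus N P Q p v \<and> M_plus N' P' Q' p v \<le> M_plus N P Q p v"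
proof
  show "M_minus N P Q p v \<le> M_minus N' P' Q' p v"
    using assms(2-4,7) by (intro M_minus_extend_ge) (auto intro: less_imp_le)
  show "M_plus N' P' Q' p v \<le> M_plus N P Q p v"
    using assms(2,3,8) by (intro M_plus_extend_le) auto
qed

end
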